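(* Let $k$ be a positive integer, $V=[k]\times[k]$, terminals $t_i=(i,i)$, and $\gamma=2\lfloor 2k-\sqrt{3k^2-2k}\rfloor$. Let $f$ be the function on $2^V$ defined below with this $\gamma$. Call a partition $(A_1,\ldots,A_k)$ of $V$ with $t_\ell\in A_\ell$ for all $\ell$ an assignment, with cost $\sum_{\ell=1}^k f(A_\ell)$, and call it symmetric if $(i,j)$ and $(j,i)$ lie in the same part for all $i,j$. Then the ratio of the minimum cost of a symmetric assignment to the minimum cost of an assignment is at least $\frac{8\sqrt3-12}{2\sqrt3-2}-O(\frac1k)$.
   Context: Rows $R_i=\{(i,j):j\in[k]\}$, columns $C_i=\{(j,i):j\in[k]\}$. Define $\phi:\mathbb{R}\to\mathbb{R}$ by $\phi(t)=t$ if $t\le k-\gamma/2$ and $\phi(t)=2k-t-\gamma$ otherwise. For $i\in[k]$ and $S\subseteq V$ let $g_i(S)=\phi(|S|)$ if $t_i\notin S$ and $g_i(S)=\phi(k-|S|)$ if $t_i\in S$. Then $f(S)=\sum_{i=1}^k g_i(S\cap R_i)+\sum_{i=1}^k g_i(S\cap C_i)$. *)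

theory Defs
  imports Complex_Main
begin

definition Vset :: "nat \<Rightarrow> (nat \<times> nat) set" where
  "Vset k = {1..k} \<times> {1..k}"

definition Row :: "nat \<Rightarrow> nat \<Rightarrow> (nat \<times> nat) set" where
  "Row k i = {(i, j) | j. j \<in> {1..k}}"

definition Col :: "nat \<Rightarrow> nat \<Rightarrow> (nat \<times> nat) set" where
  "Col k i = {(j, i) | j. j \<in> {1..k}}"

definition gam :: "nat \<Rightarrow> real" where
  "gam k = 2 * of_int \<lfloor>2 * real k - sqrt (3 * (real k)^2 - 2 * real k)\<rfloor>"

definition phi :: "nat \<Rightarrow> real \<Rightarrow> real" where
  "phi k t = (if t \<le> real k - gam k / 2 then t else 2 * real k - t - gam k)"

definition gfun :: "nat \<Rightarrow> nat \<Rightarrow> (nat \<times> nat) set \<Rightarrow> real" where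
  "gfun k i S = (if (i, i) \<notin> S then phi k (real (card S)) else phi k (real k - real (card S)))"

definition fcut :: "nat \<Rightarrow> (nat \<times> nat) set \<Rightarrow> real" where
  "fcut k S = (\<Sum>i = 1..k. gfun k i (S \<inter> Row k i)) + (\<Sum>i = 1..k. gfun k i (S \<inter> Col k i))"

definition is_assignment :: "nat \<Rightarrow> (nat \<Rightarrow> (nat \<times> nat) set) \<Rightarrow> bool" where
  "is_assignment k A \<longleftrightarrow>
     (\<forall>l \<in> {1..k}. (l, l) \<in> A l) \<and>
     (\<forall>l \<in> {1..k}. \<forall>m \<in> {1..k}. l \<noteq> m \<longrightarrow> A l \<inter> A m = {}) \<and>
     (\<Union>l \<in> {1..k}. A l) = Vset k"

definition is_symmetric :: "nat \<Rightarrow> (nat \<Rightarrow> (nat \<times> nat) set) \<Rightarrow> bool" where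
  "is_symmetric k A \<longleftrightarrow>
     (\<forall>i \<in> {1..k}. \<forall>j \<in> {1..k}. \<forall>l \<in> {1..k}. (i, j) \<in> A l \<longleftrightarrow> (j, i) \<in> A l)"

definition cost :: "nat \<Rightarrow> (nat \<Rightarrow> (nat \<times> nat) set) \<Rightarrow> real" where
  "cost k A = (\<Sum>l = 1..k. fcut k (A l))"

definition min_cost :: "nat \<Rightarrow> real" where
  "min_cost k = Min {cost k A | A. is_assignment k A}"

definition min_sym_cost :: "nat \<Rightarrow> real" where
  "min_sym_cost k = Min {cost k A | A. is_assignment k A \<and> is_symmetric k A}"

end

theory Submission
  imports Defs
begin

text \<open>
  In a symmetric assignment column i contributes exactly what row i does, so the cost is
  twice the sum of the row costs \<open>\<phi>(k - a(j,j)) + \<Sum>\<^sub>l\<^sub>\<noteq>\<^sub>j \<phi>(a(j,l))\<close>, where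
  \<open>a(j,l) = |A\<^sub>l \<inter> R\<^sub>j|\<close>. If some \<open>a(j,l)\<close> with \<open>l \<noteq> j\<close> exceeds \<open>k - \<gamma>/2\<close>, row j pays
  at least \<open>2(k - \<gamma>)\<close> plus twice the number of its cells \<open>(j,i)\<close> that go to the terminal i.
  Otherwise row j is light and pays at least \<open>2(k - \<gamma>) + \<gamma>\<close>, less twice the number of cells
  it keeps in heavy columns and twice the excess over \<open>\<gamma>/2 - 1\<close> of the number it keeps in
  light columns. By symmetry a cell \<open>(j,i)\<close> that a light row keeps in a heavy column i is a
  cell \<open>(i,j)\<close> that row i gives to the terminal j, so these terms cancel; and no two
  terminals keep both \<open>(i,j)\<close> and \<open>(j,i)\<close>, so the cells kept among light rows form a
  tournament. What remains is a quadratic in the numbers of light and of excessive rows,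
  which is \<open>O(k)\<close> because \<open>\<gamma> \<approx> (4 - 2\<surd>3)k\<close> is a root of \<open>\<gamma>\<^sup>2 - 8k\<gamma> + 4k\<^sup>2\<close>.
  Hence every symmetric assignment costs at least \<open>4k(k - \<gamma>) - O(k)\<close>, whereas giving every
  terminal its row costs at most \<open>k(2k - \<gamma>)\<close>.
\<close>

lemma Row_eq: "Row k i = {i} \<times> {1..k}"
  unfolding Row_def by auto

lemma Col_eq: "Col k i = {1..k} \<times> {i}"
  unfolding Col_def by auto

lemma card_Row: "card (Row k i) = k"
  by (simp add: Row_eq card_cartesian_product)

lemma card_Col: "card (Col k i) = k"
  by (simp add: Col_eq card_cartesian_product)

lemma phi_eq_self: "t \<le> real k - gam k / 2 \<Longrightarrow> phi k t = t"
  unfolding phi_def by simp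

lemma phi_eq_reflected: "real k - gam k / 2 < t \<Longrightarrow> phi k t = 2 * real k - t - gam k"
  unfolding phi_def by simp

lemma phi_le_self: "phi k t \<le> t"
  unfolding phi_def by auto

lemma phi_le_reflected: "phi k t \<le> 2 * real k - t - gam k"
  unfolding phi_def by auto

lemma phi_nonneg: "0 \<le> t \<Longrightarrow> t \<le> real k \<Longrightarrow> gam k \<le> real k \<Longrightarrow> 0 \<le> phi k t"
  unfolding phi_def by auto

lemma phi_pos: "1 \<le> t \<Longrightarrow> t \<le> real k \<Longrightarrow> gam k < real k \<Longrightarrow> 0 < phi k t"
  unfolding phi_def by auto

lemma assignment_subset: "is_assignment k A \<Longrightarrow> l \<in> {1..k} \<Longrightarrow> A l \<subseteq> Vset k"
  unfolding is_assignment_def by blast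

lemma assignment_unique:
  "is_assignment k A \<Longrightarrow> l \<in> {1..k} \<Longrightarrow> m \<in> {1..k} \<Longrightarrow> p \<in> A l \<Longrightarrow> p \<in> A m \<Longrightarrow> l = m"
  unfolding is_assignment_def by blast

lemma assignment_diag_iff:
  "is_assignment k A \<Longrightarrow> l \<in> {1..k} \<Longrightarrow> i \<in> {1..k} \<Longrightarrow> (i, i) \<in> A l \<longleftrightarrow> l = i"
  using assignment_unique[of k A l i "(i, i)"] unfolding is_assignment_def by blast

lemma assignment_cover: "is_assignment k A \<Longrightarrow> p \<in> Vset k \<Longrightarrow> \<exists>l\<in>{1..k}. p \<in> A l"
  unfolding is_assignment_def by blast

lemma symmetric_swap_iff:
  "is_symmetric k A \<Longrightarrow> i \<in> {1..k} \<Longrightarrow> j \<in> {1..k} \<Longrightarrow> l \<in> {1..k} \<Longrightarrow> (i, j) \<in> A l \<longleftrightarrow> (j, i) \<in> A l"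
  unfolding is_symmetric_def by blast

lemma finite_costs: "finite {cost k A | A. is_assignment k A}"
proof -
  let ?F = "{f. \<forall>l. (l \<in> {1..k} \<longrightarrow> f l \<in> Pow (Vset k)) \<and> (l \<notin> {1..k} \<longrightarrow> f l = {})}"
  have "{cost k A | A. is_assignment k A} \<subseteq> cost k ` ?F"
  proof
    fix c assume "c \<in> {cost k A | A. is_assignment k A}"
    then obtain A where A: "is_assignment k A" "c = cost k A" by blast
    have "cost k A = cost k (\<lambda>l. if l \<in> {1..k} then A l else {})"
      unfolding cost_def by (intro sum.cong) auto
    moreover have "(\<lambda>l. if l \<in> {1..k} then A l else {}) \<in> ?F"
      using assignment_subset[OF A(1)] by auto
    ultimately show "c \<in> cost k ` ?F" using A(2) by blast
  qed
  moreover have "finite ?F" by (intro finite_set_of_finite_funs) (auto simp: Vset_def)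
  ultimately show ?thesis using finite_surj by blast
qed

lemma Min_cost_attained:
  assumes "Q A0" "\<And>A. Q A \<Longrightarrow> is_assignment k A"
  shows "\<exists>A. Q A \<and> Min {cost k A | A. Q A} = cost k A"
proof -
  have "finite {cost k A | A. Q A}" by (rule finite_subset[OF _ finite_costs]) (use assms(2) in blast)
  moreover have "{cost k A | A. Q A} \<noteq> {}" using assms(1) by blast
  ultimately have "Min {cost k A | A. Q A} \<in> {cost k A | A. Q A}" by (rule Min_in)
  thus ?thesis by blast
qed

lemma Min_cost_le:
  assumes "Q A" "\<And>A. Q A \<Longrightarrow> is_assignment k A"
  shows "Min {cost k A | A. Q A} \<le> cost k A"
  by (rule Min_le[OF finite_subset[OF _ finite_costs]]) (use assms in blast)+

subsection \<open>Row costs\<close>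

definition row_count :: "nat \<Rightarrow> (nat \<Rightarrow> (nat \<times> nat) set) \<Rightarrow> nat \<Rightarrow> nat \<Rightarrow> nat" where
  "row_count k A j l = card (A l \<inter> Row k j)"

definition row_cost :: "nat \<Rightarrow> (nat \<Rightarrow> (nat \<times> nat) set) \<Rightarrow> nat \<Rightarrow> real" where
  "row_cost k A j = (\<Sum>l\<in>{1..k} - {j}. phi k (row_count k A j l)) + phi k (real k - row_count k A j j)"

lemma sum_row_count:
  assumes asg: "is_assignment k A" and j: "j \<in> {1..k}"
  shows "(\<Sum>l\<in>{1..k}. row_count k A j l) = k"
proof -
  have "card (Row k j) = card (\<Union>l\<in>{1..k}. A l \<inter> Row k j)"
    using assignment_cover[OF asg] j unfolding Row_eq Vset_def by (intro arg_cong[where f = card]) blast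
  also have "\<dots> = (\<Sum>l\<in>{1..k}. card (A l \<inter> Row k j))"
    by (rule card_UN_disjoint) (use assignment_unique[OF asg] in \<open>auto simp: Row_eq\<close>)
  finally show ?thesis unfolding row_count_def card_Row by simp
qed

lemma gfun_Row_part:
  assumes "is_assignment k A" "i \<in> {1..k}" "l \<in> {1..k}"
  shows "gfun k i (A l \<inter> Row k i) =
    (if l = i then phi k (real k - row_count k A i i) else phi k (row_count k A i l))"
  using assignment_diag_iff[OF assms(1,3,2)] assms(2)
  unfolding gfun_def row_count_def by (auto simp: Row_eq)

lemma sum_gfun_Row_eq_row_cost:
  assumes asg: "is_assignment k A" and i: "i \<in> {1..k}"
  shows "(\<Sum>l\<in>{1..k}. gfun k i (A l \<inter> Row k i)) = row_cost k A i"
proof -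
  have "(\<Sum>l\<in>{1..k}. gfun k i (A l \<inter> Row k i))
      = gfun k i (A i \<inter> Row k i) + (\<Sum>l\<in>{1..k} - {i}. gfun k i (A l \<inter> Row k i))"
    using i by (simp add: sum.remove)
  also have "\<dots> = row_cost k A i"
    unfolding row_cost_def using gfun_Row_part[OF asg i] i by (simp add: add.commute)
  finally show ?thesis .
qed

lemma symmetric_Col_part:
  assumes sym: "is_symmetric k A" and "i \<in> {1..k}" "l \<in> {1..k}"
  shows "A l \<inter> Col k i = prod.swap ` (A l \<inter> Row k i)"
proof (intro equalityI subsetI)
  fix p assume "p \<in> A l \<inter> Col k i"
  then obtain a where "p = (a, i)" "a \<in> {1..k}" "(a, i) \<in> A l" by (auto simp: Col_eq)
  thus "p \<in> prod.swap ` (A l \<inter> Row k i)"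
    using symmetric_swap_iff[OF sym] assms by (intro image_eqI[where x = "(i, a)"]) (auto simp: Row_eq)
next
  fix p assume "p \<in> prod.swap ` (A l \<inter> Row k i)"
  then obtain a where "p = (a, i)" "a \<in> {1..k}" "(i, a) \<in> A l" by (auto simp: Row_eq)
  thus "p \<in> A l \<inter> Col k i" using symmetric_swap_iff[OF sym] assms by (auto simp: Col_eq)
qed

lemma gfun_Col_eq_Row:
  assumes "is_symmetric k A" "i \<in> {1..k}" "l \<in> {1..k}"
  shows "gfun k i (A l \<inter> Col k i) = gfun k i (A l \<inter> Row k i)"
proof -
  have "card (A l \<inter> Col k i) = card (A l \<inter> Row k i)"
    using symmetric_Col_part[OF assms] by (simp add: card_image)
  moreover have "(i, i) \<in> A l \<inter> Col k i \<longleftrightarrow> (i, i) \<in> A l \<inter> Row k i"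
    using assms(2) by (auto simp: Row_eq Col_eq)
  ultimately show ?thesis unfolding gfun_def by simp
qed

lemma cost_symmetric:
  assumes asg: "is_assignment k A" and sym: "is_symmetric k A"
  shows "cost k A = 2 * (\<Sum>j\<in>{1..k}. row_cost k A j)"
proof -
  have "cost k A = (\<Sum>l\<in>{1..k}. 2 * (\<Sum>i\<in>{1..k}. gfun k i (A l \<inter> Row k i)))"
    unfolding cost_def fcut_def using gfun_Col_eq_Row[OF sym] by (intro sum.cong) auto
  also have "\<dots> = 2 * (\<Sum>i\<in>{1..k}. \<Sum>l\<in>{1..k}. gfun k i (A l \<inter> Row k i))"
    by (simp add: sum_distrib_left[symmetric], subst sum.swap, simp)
  also have "\<dots> = 2 * (\<Sum>j\<in>{1..k}. row_cost k A j)"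
    using sum_gfun_Row_eq_row_cost[OF asg] by simp
  finally show ?thesis .
qed

subsection \<open>Heavy and light rows\<close>

definition kept_cols :: "(nat \<Rightarrow> (nat \<times> nat) set) \<Rightarrow> nat \<Rightarrow> nat set \<Rightarrow> nat set" where
  "kept_cols A j X = {i \<in> X. i \<noteq> j \<and> (j, i) \<in> A j}"

definition given_cols :: "(nat \<Rightarrow> (nat \<times> nat) set) \<Rightarrow> nat \<Rightarrow> nat set \<Rightarrow> nat set" where
  "given_cols A j X = {i \<in> X. i \<noteq> j \<and> (j, i) \<in> A i}"

lemma row_count_diag:
  assumes asg: "is_assignment k A" and j: "j \<in> {1..k}"
  shows "row_count k A j j = 1 + card (kept_cols A j {1..k})"
proof -
  have "A j \<inter> Row k j = insert (j, j) (Pair j ` kept_cols A j {1..k})"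
    using assignment_subset[OF asg j] assignment_diag_iff[OF asg j j] j
    unfolding kept_cols_def Row_eq Vset_def by auto
  moreover have "(j, j) \<notin> Pair j ` kept_cols A j {1..k}" unfolding kept_cols_def by auto
  ultimately show ?thesis
    unfolding row_count_def by (simp add: card_image inj_on_def kept_cols_def)
qed

lemma card_kept_cols_Un:
  assumes "finite N" "finite G" "N \<inter> G = {}"
  shows "card (kept_cols A j (N \<union> G)) = card (kept_cols A j N) + card (kept_cols A j G)"
proof -
  have "kept_cols A j (N \<union> G) = kept_cols A j N \<union> kept_cols A j G" unfolding kept_cols_def by auto
  thus ?thesis using assms unfolding kept_cols_def by (simp add: card_Un_disjoint disjoint_iff)
qed

lemma row_count_add_card_given_cols_le:
  assumes asg: "is_assignment k A" and j: "j \<in> {1..k}" and L: "L \<in> {1..k}" "L \<noteq> j"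
    and N: "N \<subseteq> {1..k}"
  shows "row_count k A j L + card (given_cols A j N) \<le> k"
proof -
  \<comment> \<open>The cell \<open>(j,j)\<close> stands in for \<open>(j,L)\<close>, which may lie both in \<open>A L\<close> and among the given cells.\<close>
  let ?T = "insert (j, j) (Pair j ` (given_cols A j N - {L}))"
  have finN: "finite N" using finite_subset[OF N] by simp
  have fin_given: "finite (given_cols A j N)" unfolding given_cols_def using finN by auto
  have "card (given_cols A j N) \<le> card (given_cols A j N - {L}) + 1"
    using fin_given card_Suc_Diff1[OF fin_given, of L] by (cases "L \<in> given_cols A j N") auto
  also have "\<dots> = card ?T"
  proof -
    have "(j, j) \<notin> Pair j ` (given_cols A j N - {L})" by (auto simp: given_cols_def)
    thus ?thesis using fin_given by (simp add: card_image inj_on_def)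
  qed
  finally have "row_count k A j L + card (given_cols A j N) \<le> card (A L \<inter> Row k j) + card ?T"
    unfolding row_count_def by simp
  also have "\<dots> = card ((A L \<inter> Row k j) \<union> ?T)"
  proof (rule card_Un_disjoint[symmetric])
    show "(A L \<inter> Row k j) \<inter> ?T = {}"
      using assignment_diag_iff[OF asg L(1) j] assignment_unique[OF asg _ L(1)] L(2) N
      unfolding given_cols_def by fastforce
  qed (use fin_given in \<open>auto simp: Row_eq\<close>)
  also have "\<dots> \<le> card (Row k j)"
    by (rule card_mono) (use N j in \<open>auto simp: Row_eq given_cols_def\<close>)
  finally show ?thesis by (simp add: card_Row)
qed

lemma row_cost_heavy:
  assumes asg: "is_assignment k A" and j: "j \<in> {1..k}" and L: "L \<in> {1..k}" "L \<noteq> j"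
    and heavy: "real k - gam k / 2 < row_count k A j L" and gk: "gam k \<le> real k"
  shows "row_cost k A j = 4 * real k - 2 * real (row_count k A j L) - 2 * gam k"
proof -
  define R where "R = (\<Sum>l\<in>{1..k} - {j} - {L}. row_count k A j l)"
  have "(\<Sum>l\<in>{1..k}. row_count k A j l) = row_count k A j j + row_count k A j L + R"
    using j L unfolding R_def by (simp add: sum.remove)
  hence rest: "row_count k A j j + row_count k A j L + R = k" using sum_row_count[OF asg j] by simp
  have "1 \<le> row_count k A j j" using row_count_diag[OF asg j] by simp
  have "phi k (row_count k A j l) = row_count k A j l" if "l \<in> {1..k} - {j} - {L}" for l
  proof (rule phi_eq_self)
    have "row_count k A j l \<le> R" unfolding R_def by (rule member_le_sum) (use that in auto)
    thus "real (row_count k A j l) \<le> real k - gam k / 2"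
      using rest \<open>1 \<le> row_count k A j j\<close> heavy gk by linarith
  qed
  hence "(\<Sum>l\<in>{1..k} - {j} - {L}. phi k (row_count k A j l)) = R"
    unfolding R_def of_nat_sum by (intro sum.cong) auto
  moreover have "(\<Sum>l\<in>{1..k} - {j}. phi k (row_count k A j l))
      = phi k (row_count k A j L) + (\<Sum>l\<in>{1..k} - {j} - {L}. phi k (row_count k A j l))"
    using L by (subst sum.remove[of _ L]) auto
  moreover have "phi k (real k - row_count k A j j) = real k + row_count k A j j - gam k"
    using rest heavy by (subst phi_eq_reflected) linarith+
  ultimately show ?thesis
    unfolding row_cost_def using phi_eq_reflected[OF heavy] rest by simp
qed

lemma row_cost_heavy_ge:
  assumes asg: "is_assignment k A" and j: "j \<in> {1..k}" and L: "L \<in> {1..k}" "L \<noteq> j"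
    and heavy: "real k - gam k / 2 < row_count k A j L" and gk: "gam k \<le> real k"
    and N: "N \<subseteq> {1..k}"
  shows "2 * (real k - gam k) + 2 * real (card (given_cols A j N)) \<le> row_cost k A j"
proof -
  have "real (row_count k A j L) + real (card (given_cols A j N)) \<le> real k"
    using row_count_add_card_given_cols_le[OF asg j L N] by linarith
  thus ?thesis using row_cost_heavy[OF asg j L heavy gk] by argo
qed

lemma row_cost_light:
  assumes asg: "is_assignment k A" and j: "j \<in> {1..k}"
    and light: "\<forall>l\<in>{1..k} - {j}. row_count k A j l \<le> real k - gam k / 2"
  shows "row_cost k A j = (real k - row_count k A j j) + phi k (real k - row_count k A j j)"
proof -
  have "(\<Sum>l\<in>{1..k}. row_count k A j l) = row_count k A j j + (\<Sum>l\<in>{1..k} - {j}. row_count k A j l)"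
    using j by (simp add: sum.remove)
  hence "real k = row_count k A j j + (\<Sum>l\<in>{1..k} - {j}. real (row_count k A j l))"
    using sum_row_count[OF asg j] by (metis of_nat_add of_nat_sum)
  hence "real k - row_count k A j j = (\<Sum>l\<in>{1..k} - {j}. real (row_count k A j l))"
    by simp
  also have "\<dots> = (\<Sum>l\<in>{1..k} - {j}. phi k (row_count k A j l))"
    using light phi_eq_self by (intro sum.cong) auto
  finally show ?thesis unfolding row_cost_def by simp
qed

lemma row_cost_light_ge:
  assumes asg: "is_assignment k A" and j: "j \<in> {1..k}"
    and light: "\<forall>l\<in>{1..k} - {j}. row_count k A j l \<le> real k - gam k / 2"
    and NG: "N \<union> G = {1..k}" "N \<inter> G = {}"
  shows "2 * (real k - gam k) + gam k - 2 * max 0 (real (card (kept_cols A j N)) - (gam k / 2 - 1))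
    \<le> row_cost k A j + 2 * real (card (kept_cols A j G))"
proof -
  have "finite N" "finite G" using NG(1) by (metis finite_Un finite_atLeastAtMost)+
  hence d: "row_count k A j j = 1 + card (kept_cols A j N) + card (kept_cols A j G)"
    using row_count_diag[OF asg j] card_kept_cols_Un[OF _ _ NG(2)] NG(1) by simp
  show ?thesis
  proof (cases "real k - row_count k A j j \<le> real k - gam k / 2")
    case True
    then show ?thesis using row_cost_light[OF asg j light] d phi_eq_self[OF True] by (auto simp: max_def)
  next
    case False
    then show ?thesis using row_cost_light[OF asg j light] d phi_eq_reflected[of k] by (auto simp: max_def)
  qed
qed

subsection \<open>Counting kept cells\<close>

lemma card_filter_eq_sum: "finite X \<Longrightarrow> card {x \<in> X. P x} = (\<Sum>x\<in>X. if P x then 1 else 0)"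
  by (simp add: sum.inter_filter[symmetric])

lemma sum_card_kept_cols_eq_sum_card_given_cols:
  assumes sym: "is_symmetric k A" and N: "N \<subseteq> {1..k}" and G: "G \<subseteq> {1..k}"
  shows "(\<Sum>j\<in>N. card (kept_cols A j G)) = (\<Sum>i\<in>G. card (given_cols A i N))"
proof -
  have fin: "finite N" "finite G" using finite_subset[OF N] finite_subset[OF G] by auto
  have "(\<Sum>j\<in>N. card (kept_cols A j G)) = (\<Sum>j\<in>N. \<Sum>i\<in>G. if i \<noteq> j \<and> (j, i) \<in> A j then 1 else 0)"
    unfolding kept_cols_def using fin by (simp add: card_filter_eq_sum)
  also have "\<dots> = (\<Sum>i\<in>G. \<Sum>j\<in>N. if i \<noteq> j \<and> (j, i) \<in> A j then 1 else 0)"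
    by (rule sum.swap)
  also have "\<dots> = (\<Sum>i\<in>G. \<Sum>j\<in>N. if j \<noteq> i \<and> (i, j) \<in> A j then 1 else 0)"
  proof (intro sum.cong refl)
    fix i j assume "i \<in> G" "j \<in> N"
    hence "(i, j) \<in> A j \<longleftrightarrow> (j, i) \<in> A j" using symmetric_swap_iff[OF sym] N G by blast
    thus "(if i \<noteq> j \<and> (j, i) \<in> A j then 1 else 0) = (if j \<noteq> i \<and> (i, j) \<in> A j then 1 else (0::nat))"
      by auto
  qed
  also have "\<dots> = (\<Sum>i\<in>G. card (given_cols A i N))"
    unfolding given_cols_def using fin by (simp add: card_filter_eq_sum)
  finally show ?thesis .
qed

lemma not_kept_both:
  assumes asg: "is_assignment k A" and sym: "is_symmetric k A"
    and ij: "i \<in> {1..k}" "j \<in> {1..k}" "i \<noteq> j"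
  shows "\<not> ((j, i) \<in> A j \<and> (i, j) \<in> A i)"
  using symmetric_swap_iff[OF sym ij(1,2,1)] assignment_unique[OF asg ij(2,1), of "(j, i)"] ij(3)
  by blast

text \<open>The cells kept among the rows of X form a tournament on X.\<close>

lemma sum_card_kept_cols_self_le:
  assumes asg: "is_assignment k A" and sym: "is_symmetric k A" and X: "X \<subseteq> {1..k}"
  shows "2 * (\<Sum>j\<in>X. card (kept_cols A j X)) + card X \<le> card X * card X"
proof -
  have fX: "finite X" using finite_subset[OF X] by simp
  define P where "P j i = (if i \<noteq> j \<and> (j, i) \<in> A j then 1 else 0 :: nat)" for j i
  have "(\<Sum>j\<in>X. card (kept_cols A j X)) = (\<Sum>j\<in>X. \<Sum>i\<in>X. P j i)"
    unfolding kept_cols_def P_def using fX by (simp add: card_filter_eq_sum)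
  moreover have "(\<Sum>j\<in>X. \<Sum>i\<in>X. P j i) = (\<Sum>j\<in>X. \<Sum>i\<in>X. P i j)" by (rule sum.swap)
  ultimately have "2 * (\<Sum>j\<in>X. card (kept_cols A j X)) = (\<Sum>j\<in>X. \<Sum>i\<in>X. P j i + P i j)"
    by (simp add: sum.distrib)
  also have "\<dots> \<le> (\<Sum>j\<in>X. \<Sum>i\<in>X. if i \<noteq> j then 1 else 0)"
  proof (intro sum_mono)
    fix i j assume "j \<in> X" "i \<in> X"
    hence "i \<noteq> j \<Longrightarrow> \<not> ((j, i) \<in> A j \<and> (i, j) \<in> A i)" using not_kept_both[OF asg sym] X by blast
    thus "P j i + P i j \<le> (if i \<noteq> j then 1 else 0)" unfolding P_def by auto
  qed
  also have "\<dots> = (\<Sum>j\<in>X. card (X - {j}))"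
  proof (intro sum.cong refl)
    fix j
    have "X - {j} = {i \<in> X. i \<noteq> j}" by auto
    thus "(\<Sum>i\<in>X. if i \<noteq> j then 1 else 0) = card (X - {j})" using fX by (simp add: card_filter_eq_sum)
  qed
  finally have "2 * (\<Sum>j\<in>X. card (kept_cols A j X)) + card X \<le> (\<Sum>j\<in>X. card (X - {j}) + 1)"
    by (simp add: sum.distrib)
  also have "\<dots> = (\<Sum>j\<in>X. card X)"
    using card_Suc_Diff1[OF fX] by (intro sum.cong refl) simp
  also have "\<dots> = card X * card X" by simp
  finally show ?thesis .
qed

lemma sum_card_kept_cols_le:
  assumes asg: "is_assignment k A" and sym: "is_symmetric k A"
    and X: "X \<subseteq> N" and N: "N \<subseteq> {1..k}"
  shows "2 * (\<Sum>j\<in>X. card (kept_cols A j N)) + card X \<le> card X * card X + 2 * card X * card (N - X)"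
proof -
  have fin: "finite N" "finite X" using finite_subset[OF N] finite_subset[OF X] by auto
  have "card (kept_cols A j N) \<le> card (kept_cols A j X) + card (N - X)" for j
  proof -
    have "card (kept_cols A j N) \<le> card (kept_cols A j X \<union> (N - X))"
      by (rule card_mono) (use fin in \<open>auto simp: kept_cols_def\<close>)
    also have "\<dots> \<le> card (kept_cols A j X) + card (N - X)" by (rule card_Un_le)
    finally show ?thesis .
  qed
  hence "(\<Sum>j\<in>X. card (kept_cols A j N)) \<le> (\<Sum>j\<in>X. card (kept_cols A j X) + card (N - X))"
    by (intro sum_mono)
  hence "(\<Sum>j\<in>X. card (kept_cols A j N)) \<le> (\<Sum>j\<in>X. card (kept_cols A j X)) + card X * card (N - X)"
    by (simp add: sum.distrib)
  moreover have "2 * (\<Sum>j\<in>X. card (kept_cols A j X)) + card X \<le> card X * card X"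
    using sum_card_kept_cols_self_le[OF asg sym] X N by (meson order_trans)
  ultimately show ?thesis by linarith
qed

lemma sum_excess_kept_cols_le:
  assumes asg: "is_assignment k A" and sym: "is_symmetric k A" and N: "N \<subseteq> {1..k}"
  shows "\<exists>x \<le> card N. 2 * (\<Sum>j\<in>N. max 0 (real (card (kept_cols A j N)) - \<theta>))
    \<le> 2 * real x * (real (card N) - real x) + real x * (real x - 1) - 2 * real x * \<theta>"
proof -
  define u where "u j = real (card (kept_cols A j N))" for j
  define X where "X = {j \<in> N. \<theta> < u j}"
  have XN: "X \<subseteq> N" unfolding X_def by auto
  have fin: "finite N" "finite X" using finite_subset[OF N] finite_subset[OF XN] by auto
  have "(\<Sum>j\<in>X. u j - \<theta>) = (\<Sum>j\<in>N. if \<theta> < u j then u j - \<theta> else 0)"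
    unfolding X_def using fin by (simp add: sum.inter_filter)
  also have "\<dots> = (\<Sum>j\<in>N. max 0 (u j - \<theta>))"
    by (intro sum.cong) auto
  finally have excess: "(\<Sum>j\<in>N. max 0 (u j - \<theta>)) = (\<Sum>j\<in>X. u j) - real (card X) * \<theta>"
    by (simp add: sum_subtractf)
  have "real (2 * (\<Sum>j\<in>X. card (kept_cols A j N)) + card X)
      \<le> real (card X * card X + 2 * card X * card (N - X))"
    using sum_card_kept_cols_le[OF asg sym XN N] by (simp only: of_nat_le_iff)
  moreover have "real (card (N - X)) = real (card N) - real (card X)"
    using card_Diff_subset[OF fin(2) XN] card_mono[OF fin(1) XN] by simp
  ultimately have "2 * (\<Sum>j\<in>X. u j) + real (card X)
      \<le> real (card X) * real (card X) + 2 * real (card X) * (real (card N) - real (card X))"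
    unfolding u_def by (simp add: of_nat_sum)
  hence "2 * (\<Sum>j\<in>N. max 0 (u j - \<theta>)) \<le> 2 * real (card X) * (real (card N) - real (card X))
      + real (card X) * (real (card X) - 1) - 2 * real (card X) * \<theta>"
    unfolding excess by (simp add: algebra_simps)
  thus ?thesis unfolding u_def using card_mono[OF fin(1) XN] by blast
qed

definition light_rows :: "nat \<Rightarrow> (nat \<Rightarrow> (nat \<times> nat) set) \<Rightarrow> nat set" where
  "light_rows k A = {j \<in> {1..k}. \<forall>l\<in>{1..k} - {j}. row_count k A j l \<le> real k - gam k / 2}"

lemma sum_row_cost_heavy_ge:
  assumes asg: "is_assignment k A" and gk: "gam k \<le> real k"
  defines "N \<equiv> light_rows k A" and "G \<equiv> {1..k} - light_rows k A"
  shows "real (card G) * (2 * (real k - gam k)) + 2 * (\<Sum>j\<in>G. real (card (given_cols A j N)))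
    \<le> (\<Sum>j\<in>G. row_cost k A j)"
proof -
  have "(\<Sum>j\<in>G. 2 * (real k - gam k) + 2 * real (card (given_cols A j N))) \<le> (\<Sum>j\<in>G. row_cost k A j)"
  proof (rule sum_mono)
    fix j assume "j \<in> G"
    then obtain L where "j \<in> {1..k}" "L \<in> {1..k}" "L \<noteq> j" "real k - gam k / 2 < row_count k A j L"
      unfolding G_def light_rows_def by force
    moreover have "N \<subseteq> {1..k}" unfolding N_def light_rows_def by auto
    ultimately show "2 * (real k - gam k) + 2 * real (card (given_cols A j N)) \<le> row_cost k A j"
      using row_cost_heavy_ge[OF asg _ _ _ _ gk] by blast
  qed
  thus ?thesis by (simp add: sum.distrib sum_distrib_left[symmetric])
qed

lemma sum_row_cost_light_ge:
  assumes asg: "is_assignment k A"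
  defines "N \<equiv> light_rows k A" and "G \<equiv> {1..k} - light_rows k A"
  shows "real (card N) * (2 * (real k - gam k) + gam k)
      - 2 * (\<Sum>j\<in>N. max 0 (real (card (kept_cols A j N)) - (gam k / 2 - 1)))
    \<le> (\<Sum>j\<in>N. row_cost k A j) + 2 * (\<Sum>j\<in>N. real (card (kept_cols A j G)))"
proof -
  have "N \<union> G = {1..k}" "N \<inter> G = {}" unfolding N_def G_def light_rows_def by auto
  hence "(\<Sum>j\<in>N. 2 * (real k - gam k) + gam k - 2 * max 0 (real (card (kept_cols A j N)) - (gam k / 2 - 1)))
      \<le> (\<Sum>j\<in>N. row_cost k A j + 2 * real (card (kept_cols A j G)))"
    using row_cost_light_ge[OF asg] unfolding N_def light_rows_def by (intro sum_mono) auto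
  thus ?thesis by (simp add: sum.distrib sum_subtractf sum_distrib_left[symmetric])
qed

lemma sum_row_cost_ge:
  assumes asg: "is_assignment k A" and sym: "is_symmetric k A" and gk: "gam k \<le> real k"
  shows "\<exists>n x. x \<le> n \<and> n \<le> k \<and>
    2 * real k * (real k - gam k) + real n * gam k - 2 * real x * (real n - real x)
      - real x * (real x - 1) + real x * gam k - 2 * real x \<le> (\<Sum>j\<in>{1..k}. row_cost k A j)"
proof -
  define N where "N = light_rows k A"
  define G where "G = {1..k} - N"
  have N: "N \<subseteq> {1..k}" and G: "G \<subseteq> {1..k}" unfolding N_def G_def light_rows_def by auto
  have fin: "finite N" "finite G" using finite_subset[OF N] finite_subset[OF G] by auto
  have "card N \<le> k" using card_mono[OF _ N] by simp
  hence cG: "real (card G) = real k - real (card N)"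
    using card_Diff_subset[OF fin(1) N] unfolding G_def by simp
  have split: "(\<Sum>j\<in>{1..k}. row_cost k A j) = (\<Sum>j\<in>N. row_cost k A j) + (\<Sum>j\<in>G. row_cost k A j)"
    using fin N unfolding G_def by (metis sum.subset_diff finite_atLeastAtMost add.commute)
  have "(\<Sum>j\<in>N. real (card (kept_cols A j G))) = (\<Sum>j\<in>G. real (card (given_cols A j N)))"
    using sum_card_kept_cols_eq_sum_card_given_cols[OF sym N G] by (metis of_nat_sum)
  moreover obtain x where "x \<le> card N" and
    "2 * (\<Sum>j\<in>N. max 0 (real (card (kept_cols A j N)) - (gam k / 2 - 1)))
      \<le> 2 * real x * (real (card N) - real x) + real x * (real x - 1) - 2 * real x * (gam k / 2 - 1)"
    using sum_excess_kept_cols_le[OF asg sym N] by blast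
  ultimately have "2 * real k * (real k - gam k) + real (card N) * gam k
      - 2 * real x * (real (card N) - real x) - real x * (real x - 1) + real x * gam k - 2 * real x
      \<le> (\<Sum>j\<in>{1..k}. row_cost k A j)"
    using sum_row_cost_heavy_ge[OF asg gk, folded N_def, folded G_def, unfolded cG]
      sum_row_cost_light_ge[OF asg, folded N_def, folded G_def] split
    by (simp add: algebra_simps)
  thus ?thesis using \<open>x \<le> card N\<close> \<open>card N \<le> k\<close> by blast
qed

subsection \<open>Estimates for \<open>\<gamma> \<approx> (4 - 2\<surd>3)k\<close>\<close>

lemma sqrt3_bounds: "17 / 10 \<le> sqrt 3" "sqrt 3 \<le> 7 / 4"
  by (rule real_le_rsqrt, simp add: power2_eq_square) (rule real_le_lsqrt, simp_all add: power2_eq_square)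

lemma gam_bounds:
  assumes k: "20 \<le> k"
  shows "(4 - 2 * sqrt 3) * k - 2 \<le> gam k" "gam k \<le> (4 - 2 * sqrt 3) * k + 2"
    and "1 \<le> gam k" "gam k < real k"
proof -
  define d where "d = sqrt (3 * (real k)\<^sup>2 - 2 * real k)"
  have "d \<le> sqrt 3 * k"
    unfolding d_def by (rule real_le_lsqrt) (simp_all add: power_mult_distrib)
  moreover have "sqrt 3 * k - 1 \<le> d"
    unfolding d_def
  proof (rule real_le_rsqrt)
    have "17 / 10 * real k \<le> sqrt 3 * real k" using sqrt3_bounds by (intro mult_right_mono) auto
    hence "2 * real k + 1 \<le> 2 * sqrt 3 * real k" using k by linarith
    thus "(sqrt 3 * k - 1)\<^sup>2 \<le> 3 * (real k)\<^sup>2 - 2 * real k"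
      by (simp add: power2_eq_square algebra_simps)
  qed
  moreover have "gam k = 2 * of_int \<lfloor>2 * real k - d\<rfloor>" unfolding gam_def d_def ..
  ultimately show lower: "(4 - 2 * sqrt 3) * k - 2 \<le> gam k" and upper: "gam k \<le> (4 - 2 * sqrt 3) * k + 2"
    by (simp_all add: algebra_simps) linarith+
  have "(4 - 2 * sqrt 3) * k \<le> 3 / 5 * k" "1 / 2 * k \<le> (4 - 2 * sqrt 3) * k"
    using sqrt3_bounds by (intro mult_right_mono; simp)+
  thus "1 \<le> gam k" "gam k < real k" using lower upper k by linarith+
qed

lemma mult_diff_le_max_endpoints:
  fixes m M c :: "'a::linordered_idom"
  assumes "0 \<le> m" "m \<le> M"
  shows "m * (m - c) \<le> max 0 (M * (M - c))"
proof -
  have "m * (m - c) \<le> m * (M - c)" using assms by (intro mult_left_mono) auto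
  also have "\<dots> \<le> max 0 (M * (M - c))"
  proof (cases "M - c \<le> 0")
    case True thus ?thesis using assms by (simp add: mult_nonneg_nonpos)
  next
    case False thus ?thesis using assms by (simp add: mult_right_mono le_max_iff_disj)
  qed
  finally show ?thesis .
qed

text \<open>The quadratic is \<open>O(k)\<close> at \<open>g = (4 - 2\<surd>3)k\<close> and decreasing for \<open>g \<le> 4k + 1\<close>.\<close>

lemma gam_quadratic_le:
  fixes g k :: real
  assumes g: "(4 - 2 * sqrt 3) * k - 2 \<le> g" "g \<le> k" and k: "20 \<le> k"
  shows "g\<^sup>2 - (8 * k + 2) * g + (2 * k + 1)\<^sup>2 \<le> 20 * k"
proof -
  define g0 where "g0 = (4 - 2 * sqrt 3) * k - 2"
  have "(4 - 2 * sqrt 3) * k \<le> 3 / 5 * k" "(12 * sqrt 3 - 4) * k \<le> 17 * k"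
    using sqrt3_bounds k by (intro mult_right_mono; simp)+
  have "g\<^sup>2 - (8 * k + 2) * g - (g0\<^sup>2 - (8 * k + 2) * g0) = (g - g0) * (g + g0 - 8 * k - 2)"
    by (simp add: power2_eq_square algebra_simps)
  also have "\<dots> \<le> 0"
    using g k \<open>(4 - 2 * sqrt 3) * k \<le> 3 / 5 * k\<close> unfolding g0_def by (intro mult_nonneg_nonpos) auto
  finally have "g\<^sup>2 - (8 * k + 2) * g \<le> g0\<^sup>2 - (8 * k + 2) * g0" by simp
  moreover have "g0\<^sup>2 - (8 * k + 2) * g0 + (2 * k + 1)\<^sup>2 = (12 * sqrt 3 - 4) * k + 9"
    unfolding g0_def by (simp add: power2_eq_square algebra_simps)
  ultimately show ?thesis using \<open>(12 * sqrt 3 - 4) * k \<le> 17 * k\<close> k by linarith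
qed

lemma quadratic_excess_ge:
  fixes x n k g :: real
  assumes xn: "0 \<le> x" "x \<le> n" "n \<le> k"
    and g: "(4 - 2 * sqrt 3) * k - 2 \<le> g" "g \<le> k" "1 \<le> g" and k: "20 \<le> k"
  shows "- 5 * k \<le> n * g - 2 * x * (n - x) - x * (x - 1) + x * g - 2 * x"
proof -
  define m where "m = 2 * n + 1 - g"
  define M where "M = 2 * k + 1 - g"
  have square: "4 * (n * g - 2 * x * (n - x) - x * (x - 1) + x * g - 2 * x)
      = (2 * x - m)\<^sup>2 - (m * (m - 2 * g) - 2 * g\<^sup>2 + 2 * g)"
    unfolding m_def by (simp add: power2_eq_square algebra_simps)
  show ?thesis
  proof (cases "m \<le> 0")
    case True
    have "0 \<le> x * x + x * (- m) + n * g" using True xn g by (intro add_nonneg_nonneg mult_nonneg_nonneg) auto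
    thus ?thesis using k unfolding m_def by (simp add: algebra_simps)
  next
    case False
    have "m * (m - 2 * g) \<le> max 0 (M * (M - 2 * g))"
      using False xn unfolding m_def M_def by (intro mult_diff_le_max_endpoints) auto
    moreover have "M * (M - 2 * g) - 2 * g\<^sup>2 + 2 * g = g\<^sup>2 - (8 * k + 2) * g + (2 * k + 1)\<^sup>2"
      unfolding M_def by (simp add: power2_eq_square algebra_simps)
    moreover have "g \<le> g\<^sup>2" using g by (simp add: power2_eq_square)
    ultimately have "m * (m - 2 * g) - 2 * g\<^sup>2 + 2 * g \<le> 20 * k"
      using gam_quadratic_le[OF g(1,2) k] k by (simp add: max_def split: if_split_asm; linarith)
    thus ?thesis using square by (smt (verit) zero_le_power2)
  qed
qed

lemma ratio_ge:
  fixes s c k g :: real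
  assumes k: "20 \<le> k" and g: "g \<le> (4 - 2 * sqrt 3) * k + 2"
    and c: "0 < c" "c \<le> k * (2 * k - g)" and s: "k * (4 * (k - g) - 10) \<le> s"
  shows "(8 * sqrt 3 - 12) / (2 * sqrt 3 - 2) - 20 / k \<le> s / c"
proof -
  define q where "q = sqrt 3 - 1"
  have q: "7 / 10 \<le> q" "q \<le> 3 / 4" using sqrt3_bounds unfolding q_def by auto
  have qk: "7 / 5 * k \<le> 2 * q * k" using q k by (intro mult_right_mono) auto
  have p: "0 < 2 * q * k - 2" "2 * q * k - 2 \<le> 2 * k - g"
    using k qk g by (argo, simp add: q_def algebra_simps)
  have L: "0 \<le> 4 * (k - g) - 10" using p qk k by argo
  have "(4 * k + 10) / (2 * k - g) \<le> (4 * k + 10) / (2 * q * k - 2)"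
    using p k by (intro divide_left_mono) auto
  also have "\<dots> \<le> 2 / q + 20 / k"
  proof -
    have "4 / q \<le> 6" "40 / k \<le> 2" using q k by (simp_all add: divide_le_eq)
    moreover have "(2 / q + 20 / k) * (2 * q * k - 2) = 4 * k - 4 / q + 40 * q - 40 / k"
      using q k by (simp add: field_simps)
    ultimately have "4 * k + 10 \<le> (2 / q + 20 / k) * (2 * q * k - 2)" using q by linarith
    thus ?thesis using p by (simp add: divide_le_eq)
  qed
  moreover have "(8 * sqrt 3 - 12) / (2 * sqrt 3 - 2) = 4 - 2 / q"
    unfolding q_def using q by (simp add: field_simps)
  ultimately have "(8 * sqrt 3 - 12) / (2 * sqrt 3 - 2) - 20 / k \<le> 4 - (4 * k + 10) / (2 * k - g)"
    by linarith
  also have "\<dots> = k * (4 * (k - g) - 10) / (k * (2 * k - g))"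
    using p k by (simp add: field_simps)
  also have "\<dots> \<le> k * (4 * (k - g) - 10) / c"
    using c L k by (intro divide_left_mono) auto
  also have "\<dots> \<le> s / c"
    using s c by (intro divide_right_mono) auto
  finally show ?thesis .
qed

subsection \<open>Positivity and the upper bound\<close>

lemma gfun_nonneg:
  assumes "S \<subseteq> Row k i \<or> S \<subseteq> Col k i" "gam k \<le> real k"
  shows "0 \<le> gfun k i S"
proof -
  have "card S \<le> k" using assms(1) card_mono[of "Row k i" S] card_mono[of "Col k i" S]
    by (auto simp: card_Row card_Col Row_eq Col_eq)
  thus ?thesis unfolding gfun_def using assms(2) by (auto intro!: phi_nonneg)
qed

lemma gfun_pos:
  assumes "S \<subseteq> Row k i \<or> S \<subseteq> Col k i" "S \<noteq> {}" "(i, i) \<notin> S" "gam k < real k"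
  shows "0 < gfun k i S"
proof -
  have "finite S" using assms(1) finite_subset by (auto simp: Row_eq Col_eq)
  hence "1 \<le> card S" using assms(2) by (simp add: Suc_le_eq card_gt_0_iff)
  moreover have "card S \<le> k" using assms(1) card_mono[of "Row k i" S] card_mono[of "Col k i" S]
    by (auto simp: card_Row card_Col Row_eq Col_eq)
  ultimately show ?thesis unfolding gfun_def using assms(3,4) by (auto intro!: phi_pos)
qed

lemma fcut_nonneg: "gam k \<le> real k \<Longrightarrow> 0 \<le> fcut k S"
  unfolding fcut_def by (intro add_nonneg_nonneg sum_nonneg gfun_nonneg) auto

lemma fcut_pos:
  assumes i: "i \<in> {1..k}" and gk: "gam k < real k"
    and S: "(S \<inter> Row k i \<noteq> {} \<and> (i, i) \<notin> S) \<or> (S \<inter> Col k i \<noteq> {} \<and> (i, i) \<notin> S)"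
  shows "0 < fcut k S"
proof -
  let ?R = "\<Sum>i = 1..k. gfun k i (S \<inter> Row k i)" and ?C = "\<Sum>i = 1..k. gfun k i (S \<inter> Col k i)"
  have "0 \<le> ?R" "0 \<le> ?C" using gk by (intro sum_nonneg gfun_nonneg; simp)+
  moreover have "gfun k i (S \<inter> Row k i) \<le> ?R" "gfun k i (S \<inter> Col k i) \<le> ?C"
    using i gk by (intro member_le_sum gfun_nonneg; simp)+
  moreover have "0 < gfun k i (S \<inter> Row k i) \<or> 0 < gfun k i (S \<inter> Col k i)"
    using S gk gfun_pos[of "S \<inter> Row k i" k i] gfun_pos[of "S \<inter> Col k i" k i] by auto
  ultimately show ?thesis unfolding fcut_def by linarith
qed

lemma cost_pos:
  assumes asg: "is_assignment k A" and k: "2 \<le> k" and gk: "gam k < real k"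
  shows "0 < cost k A"
proof -
  have k12: "1 \<in> {1..k}" "2 \<in> {1..k}" using k by auto
  then obtain l where l: "l \<in> {1..k}" "(1, 2) \<in> A l"
    using assignment_cover[OF asg, of "(1, 2)"] unfolding Vset_def by blast
  have "0 < fcut k (A l)"
  proof (cases "l = 1")
    case True
    hence "A l \<inter> Col k 2 \<noteq> {} \<and> (2, 2) \<notin> A l"
      using l k12 assignment_diag_iff[OF asg l(1) k12(2)] by (auto simp: Col_eq)
    thus ?thesis using fcut_pos[OF k12(2) gk] by blast
  next
    case False
    hence "A l \<inter> Row k 1 \<noteq> {} \<and> (1, 1) \<notin> A l"
      using l k12 assignment_diag_iff[OF asg l(1) k12(1)] by (auto simp: Row_eq)
    thus ?thesis using fcut_pos[OF k12(1) gk] by blast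
  qed
  also have "fcut k (A l) \<le> cost k A"
    unfolding cost_def using l gk by (intro member_le_sum fcut_nonneg) auto
  finally show ?thesis .
qed

lemma Row_assignment: "is_assignment k (Row k)"
  unfolding is_assignment_def Vset_def by (auto simp: Row_eq)

lemma fcut_Row_le:
  assumes l: "l \<in> {1..k}"
  shows "fcut k (Row k l) \<le> 2 * real k - gam k"
proof -
  have "gfun k i (Row k l \<inter> Row k i) = phi k 0" if "i \<in> {1..k}" for i
  proof (cases "i = l")
    case True thus ?thesis using that unfolding gfun_def by (simp add: Row_eq card_cartesian_product)
  next
    case False
    hence "Row k l \<inter> Row k i = {}" by (auto simp: Row_eq)
    thus ?thesis unfolding gfun_def by simp
  qed
  hence "(\<Sum>i = 1..k. gfun k i (Row k l \<inter> Row k i)) \<le> 0"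
    using phi_le_self[of k 0] by (intro sum_nonpos) simp
  moreover have "gfun k i (Row k l \<inter> Col k i) \<le> 1 + (if i = l then real k - gam k else 0)"
    if "i \<in> {1..k}" for i
  proof -
    have "Row k l \<inter> Col k i = {(l, i)}" using that l by (auto simp: Row_eq Col_eq)
    thus ?thesis
      unfolding gfun_def using phi_le_reflected[of k "real k - 1"] phi_le_self[of k 1] by auto
  qed
  hence "(\<Sum>i = 1..k. gfun k i (Row k l \<inter> Col k i))
      \<le> (\<Sum>i = 1..k. 1 + (if i = l then real k - gam k else 0))"
    by (intro sum_mono) simp
  moreover have "(\<Sum>i = 1..k. 1 + (if i = l then real k - gam k else 0)) = real k + (real k - gam k)"
    using l by (simp add: sum.distrib)
  ultimately show ?thesis unfolding fcut_def by linarith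
qed

lemma cost_Row_le: "cost k (Row k) \<le> real k * (2 * real k - gam k)"
proof -
  have "cost k (Row k) \<le> (\<Sum>l = 1..k. 2 * real k - gam k)"
    unfolding cost_def using fcut_Row_le by (intro sum_mono) auto
  thus ?thesis by simp
qed

definition min_assignment :: "nat \<Rightarrow> nat \<Rightarrow> (nat \<times> nat) set" where
  "min_assignment k l = {p \<in> Vset k. min (fst p) (snd p) = l}"

lemma min_assignment:
  shows "is_assignment k (min_assignment k)" "is_symmetric k (min_assignment k)"
proof -
  have "p \<in> min_assignment k (min (fst p) (snd p))" "min (fst p) (snd p) \<in> {1..k}"
    if "p \<in> Vset k" for p
    using that by (auto simp: min_assignment_def Vset_def min_def)
  thus "is_assignment k (min_assignment k)"
    unfolding is_assignment_def by (auto simp: min_assignment_def Vset_def)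
  show "is_symmetric k (min_assignment k)"
    unfolding is_symmetric_def min_assignment_def Vset_def by (auto simp: min.commute)
qed

lemma min_cost_pos: "2 \<le> k \<Longrightarrow> gam k < real k \<Longrightarrow> 0 < min_cost k"
  using Min_cost_attained[of "is_assignment k" "Row k"] Row_assignment cost_pos
  unfolding min_cost_def by fastforce

lemma min_cost_le: "min_cost k \<le> real k * (2 * real k - gam k)"
proof -
  have "min_cost k \<le> cost k (Row k)"
    unfolding min_cost_def by (rule Min_cost_le) (use Row_assignment in auto)
  thus ?thesis using cost_Row_le order_trans by blast
qed

lemma min_sym_cost_ge:
  assumes k: "20 \<le> k"
  shows "real k * (4 * (real k - gam k) - 10) \<le> min_sym_cost k"
proof -
  obtain A where A: "is_assignment k A" "is_symmetric k A" and eq: "min_sym_cost k = cost k A"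
    using Min_cost_attained[of "\<lambda>A. is_assignment k A \<and> is_symmetric k A"] min_assignment
    unfolding min_sym_cost_def by blast
  note \<gamma> = gam_bounds[OF k]
  obtain n x where nx: "x \<le> n" "n \<le> k" and rows:
    "2 * real k * (real k - gam k) + real n * gam k - 2 * real x * (real n - real x)
      - real x * (real x - 1) + real x * gam k - 2 * real x \<le> (\<Sum>j\<in>{1..k}. row_cost k A j)"
    using sum_row_cost_ge[OF A] \<gamma>(4) by fastforce
  have "- 5 * real k \<le> real n * gam k - 2 * real x * (real n - real x)
      - real x * (real x - 1) + real x * gam k - 2 * real x"
    using nx \<gamma> k by (intro quadratic_excess_ge) auto
  thus ?thesis using rows eq cost_symmetric[OF A] by (simp add: algebra_simps)
qed

theorem theorem9:
  shows "\<exists>C K. \<forall>k::nat. k \<ge> max 1 K \<longrightarrow>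
           min_sym_cost k / min_cost k \<ge> (8 * sqrt 3 - 12) / (2 * sqrt 3 - 2) - C / real k"
proof (intro exI allI impI)
  fix k :: nat
  assume "max 1 20 \<le> k"
  hence k: "20 \<le> k" by simp
  show "(8 * sqrt 3 - 12) / (2 * sqrt 3 - 2) - 20 / real k \<le> min_sym_cost k / min_cost k"
    using k gam_bounds[OF k] min_cost_pos min_cost_le min_sym_cost_ge[OF k]
    by (intro ratio_ge) auto
qed

end
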